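(* Let $T$ be a pre-truss and $P$ a non-empty normal sub-heap of $T$. Then $P$ is a paragon if and only if, for all $a,b\in T$ and $p,e\in P$, $$[a[p,e,b],ab,e]\in P\quad\text{and}\quad[[p,e,b]a,ba,e]\in P.$$
   Context: A heap is a set with a ternary operation $[-,-,-]$ satisfying $[a_1,a_2,[a_3,a_4,a_5]]=[[a_1,a_2,a_3],a_4,a_5]$ and $[a,a,b]=b=[b,a,a]$. A normal sub-heap is a non-empty subset $S$ closed under $[-,-,-]$ with $[[a,e,s],a,e]\in S$ for all $a$ in the heap and $e,s\in S$; $a\sim_S b$ iff $[a,b,s]\in S$ for some (equivalently all) $s\in S$. A pre-truss is a heap with an associative binary operation (juxtaposition). A sub-heap $S$ of $T$ is left-closed if $[ts',ts,s]\in S$ for all $s,s'\in S$, $t\in T$, right-closed if $[s't,st,s]\in S$ for all such, and closed if both. A paragon is a non-empty normal sub-heap $P$ such that every equivalence class of $\sim_P$ is a closed sub-heap of $T$. *)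

theory Defs
  imports Main
begin

text \<open>A pre-truss is modelled on the whole of a type 'a, with heap operation br
  (the ternary bracket) and juxtaposition m.\<close>

definition heap :: "('a \<Rightarrow> 'a \<Rightarrow> 'a \<Rightarrow> 'a) \<Rightarrow> bool" where
  "heap br \<longleftrightarrow>
     (\<forall>a1 a2 a3 a4 a5. br a1 a2 (br a3 a4 a5) = br (br a1 a2 a3) a4 a5) \<and>
     (\<forall>a b. br a a b = b \<and> br b a a = b)"

definition pretruss :: "('a \<Rightarrow> 'a \<Rightarrow> 'a \<Rightarrow> 'a) \<Rightarrow> ('a \<Rightarrow> 'a \<Rightarrow> 'a) \<Rightarrow> bool" where
  "pretruss br m \<longleftrightarrow> heap br \<and> (\<forall>a b c. m (m a b) c = m a (m b c))"

definition sub_heap :: "('a \<Rightarrow> 'a \<Rightarrow> 'a \<Rightarrow> 'a) \<Rightarrow> 'a set \<Rightarrow> bool" where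
  "sub_heap br S \<longleftrightarrow> (\<forall>a\<in>S. \<forall>b\<in>S. \<forall>c\<in>S. br a b c \<in> S)"

definition normal_subheap :: "('a \<Rightarrow> 'a \<Rightarrow> 'a \<Rightarrow> 'a) \<Rightarrow> 'a set \<Rightarrow> bool" where
  "normal_subheap br S \<longleftrightarrow> S \<noteq> {} \<and> sub_heap br S \<and>
     (\<forall>a. \<forall>e\<in>S. \<forall>s\<in>S. br (br a e s) a e \<in> S)"

definition heap_sim :: "('a \<Rightarrow> 'a \<Rightarrow> 'a \<Rightarrow> 'a) \<Rightarrow> 'a set \<Rightarrow> 'a \<Rightarrow> 'a \<Rightarrow> bool" where
  "heap_sim br S a b \<longleftrightarrow> (\<exists>s\<in>S. br a b s \<in> S)"

definition left_closed :: "('a \<Rightarrow> 'a \<Rightarrow> 'a \<Rightarrow> 'a) \<Rightarrow> ('a \<Rightarrow> 'a \<Rightarrow> 'a) \<Rightarrow> 'a set \<Rightarrow> bool" where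
  "left_closed br m S \<longleftrightarrow> (\<forall>s\<in>S. \<forall>s'\<in>S. \<forall>t. br (m t s') (m t s) s \<in> S)"

definition right_closed :: "('a \<Rightarrow> 'a \<Rightarrow> 'a \<Rightarrow> 'a) \<Rightarrow> ('a \<Rightarrow> 'a \<Rightarrow> 'a) \<Rightarrow> 'a set \<Rightarrow> bool" where
  "right_closed br m S \<longleftrightarrow> (\<forall>s\<in>S. \<forall>s'\<in>S. \<forall>t. br (m s' t) (m s t) s \<in> S)"

definition closed_subheap :: "('a \<Rightarrow> 'a \<Rightarrow> 'a \<Rightarrow> 'a) \<Rightarrow> ('a \<Rightarrow> 'a \<Rightarrow> 'a) \<Rightarrow> 'a set \<Rightarrow> bool" where
  "closed_subheap br m S \<longleftrightarrow> sub_heap br S \<and> left_closed br m S \<and> right_closed br m S"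

definition paragon :: "('a \<Rightarrow> 'a \<Rightarrow> 'a \<Rightarrow> 'a) \<Rightarrow> ('a \<Rightarrow> 'a \<Rightarrow> 'a) \<Rightarrow> 'a set \<Rightarrow> bool" where
  "paragon br m P \<longleftrightarrow> normal_subheap br P \<and>
     (\<forall>a. closed_subheap br m {b. heap_sim br P a b})"

end

theory Submission
  imports Defs
begin

text \<open>For a normal sub-heap \<open>P\<close>, the relation \<open>\<sim>\<^sub>P\<close> is a congruence of the heap, and
  \<open>[x, y, s] \<sim>\<^sub>P s\<close> holds exactly when \<open>x \<sim>\<^sub>P y\<close>. Hence all classes are closed iff
  juxtaposition on either side preserves \<open>\<sim>\<^sub>P\<close>. Finally, the elements related to \<open>b\<close> are
  precisely the translates \<open>[p, e, b]\<close> with \<open>p, e \<in> P\<close>, and \<open>[x, y, e] \<in> P\<close> means \<open>x \<sim>\<^sub>P y\<close>,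
  so the stated membership conditions say the same thing.\<close>

lemma heap_assoc: "heap br \<Longrightarrow> br (br a b c) d f = br a b (br c d f)"
  unfolding heap_def by metis

lemma heap_cancel_left: "heap br \<Longrightarrow> br a a b = b"
  unfolding heap_def by metis

lemma heap_cancel_right: "heap br \<Longrightarrow> br b a a = b"
  unfolding heap_def by metis

lemma heap_cancel_middle: "heap br \<Longrightarrow> br a b (br b c d) = br a c d"
  by (metis heap_assoc heap_cancel_right)

lemma heap_swap_middle:
  assumes "heap br"
  shows "br a (br b c d) f = br a d (br c b f)"
proof -
  have "br (br a d c) b (br b c d) = a"
    by (simp add: heap_assoc[OF assms] heap_cancel_left[OF assms] heap_cancel_right[OF assms]
        heap_cancel_middle[OF assms])
  then have "br a (br b c d) f = br (br (br a d c) b (br b c d)) (br b c d) f" by simp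
  also have "\<dots> = br (br a d c) b f"
    by (simp only: heap_assoc[OF assms] heap_cancel_left[OF assms])
  also have "\<dots> = br a d (br c b f)" by (simp add: heap_assoc[OF assms])
  finally show ?thesis .
qed

lemmas heap_simps = heap_assoc heap_cancel_left heap_cancel_right heap_cancel_middle
  heap_swap_middle

definition heap_sim_congruent ::
    "('a \<Rightarrow> 'a \<Rightarrow> 'a \<Rightarrow> 'a) \<Rightarrow> 'a set \<Rightarrow> ('a \<Rightarrow> 'a \<Rightarrow> 'a) \<Rightarrow> bool" where
  "heap_sim_congruent br P f \<longleftrightarrow>
     (\<forall>t s s'. heap_sim br P s s' \<longrightarrow> heap_sim br P (f t s) (f t s'))"

locale heap_normal_subheap =
  fixes br :: "'a \<Rightarrow> 'a \<Rightarrow> 'a \<Rightarrow> 'a" and P :: "'a set"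
  assumes heap: "heap br" and normal: "normal_subheap br P"
begin

abbreviation sim :: "'a \<Rightarrow> 'a \<Rightarrow> bool" (infix "\<sim>" 50)
  where "x \<sim> y \<equiv> heap_sim br P x y"

lemmas simps = heap_simps[OF heap]

lemma nonempty: "\<exists>e. e \<in> P"
  using normal unfolding normal_subheap_def by auto

lemma bracket_closed: "a \<in> P \<Longrightarrow> b \<in> P \<Longrightarrow> c \<in> P \<Longrightarrow> br a b c \<in> P"
  using normal unfolding normal_subheap_def sub_heap_def by auto

lemma conjugate_closed: "e \<in> P \<Longrightarrow> s \<in> P \<Longrightarrow> br (br a e s) a e \<in> P"
  using normal unfolding normal_subheap_def by auto

lemma heap_sim_iff: "e \<in> P \<Longrightarrow> x \<sim> y \<longleftrightarrow> br x y e \<in> P"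
  unfolding heap_sim_def by (metis bracket_closed simps(1,2))

lemma heap_sim_refl: "x \<sim> x"
  using nonempty heap_sim_iff simps(2) by metis

lemma heap_sim_sym: "x \<sim> y \<Longrightarrow> y \<sim> x"
  by (metis nonempty heap_sim_iff simps(2,4))

lemma heap_sim_trans: "x \<sim> y \<Longrightarrow> y \<sim> z \<Longrightarrow> x \<sim> z"
  by (metis nonempty heap_sim_iff simps(4))

lemma heap_sim_bracket:
  assumes "x \<sim> x'" "y \<sim> y'" "z \<sim> z'"
  shows "br x y z \<sim> br x' y' z'"
proof -
  obtain e where e: "e \<in> P" using nonempty ..
  have "br x y z \<sim> br x' y z"
    using assms(1) by (simp add: heap_sim_iff[OF e] simps)
  moreover have "br x' y z \<sim> br x' y' z"
    using conjugate_closed[OF e heap_sim_sym[OF assms(2), unfolded heap_sim_iff[OF e]],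
        of "br x' y e"]
    by (simp add: heap_sim_iff[OF e] simps)
  moreover have "br x' y' z \<sim> br x' y' z'"
    using conjugate_closed[OF e assms(3)[unfolded heap_sim_iff[OF e]], of "br x' y' e"]
    by (simp add: heap_sim_iff[OF e] simps)
  ultimately show ?thesis by (metis heap_sim_trans)
qed

lemma heap_sim_class_sub_heap: "sub_heap br {b. a \<sim> b}"
  unfolding sub_heap_def using heap_sim_bracket by (metis mem_Collect_eq simps(3))

lemma heap_sim_bracket_iff: "br x y z \<sim> z \<longleftrightarrow> x \<sim> y"
  using nonempty by (metis heap_sim_iff simps(1,2))

lemma heap_sim_translate:
  assumes "p \<in> P" "e \<in> P"
  shows "br p e b \<sim> b"
  using assms by (simp add: heap_sim_iff[OF assms(2)] simps)

lemma heap_sim_classes_closed_iff: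
  "(\<forall>a. \<forall>s\<in>{b. a \<sim> b}. \<forall>s'\<in>{b. a \<sim> b}. \<forall>t. br (f t s') (f t s) s \<in> {b. a \<sim> b})
     \<longleftrightarrow> heap_sim_congruent br P f"
  unfolding heap_sim_congruent_def Ball_def mem_Collect_eq
proof (intro iffI allI impI)
  fix t s s'
  assume "\<forall>a. \<forall>s. a \<sim> s \<longrightarrow> (\<forall>s'. a \<sim> s' \<longrightarrow> (\<forall>t. a \<sim> br (f t s') (f t s) s))"
    and "s \<sim> s'"
  then have "s \<sim> br (f t s') (f t s) s" using heap_sim_refl by blast
  then show "f t s \<sim> f t s'"
    using heap_sim_sym heap_sim_bracket_iff by blast
next
  fix a s s' t
  assume "\<forall>t s s'. s \<sim> s' \<longrightarrow> f t s \<sim> f t s'" and "a \<sim> s" "a \<sim> s'"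
  then have "f t s' \<sim> f t s" using heap_sim_sym heap_sim_trans by blast
  then have "br (f t s') (f t s) s \<sim> s" using heap_sim_bracket_iff by blast
  then show "a \<sim> br (f t s') (f t s) s"
    using \<open>a \<sim> s\<close> heap_sim_sym heap_sim_trans by blast
qed

lemma heap_sim_congruent_iff_translates:
  "heap_sim_congruent br P f \<longleftrightarrow>
     (\<forall>a b. \<forall>p\<in>P. \<forall>e\<in>P. br (f a (br p e b)) (f a b) e \<in> P)"
proof
  assume "heap_sim_congruent br P f"
  then have "f a (br p e b) \<sim> f a b" if "p \<in> P" "e \<in> P" for a b p e
    unfolding heap_sim_congruent_def using heap_sim_translate[OF that] by blast
  then show "\<forall>a b. \<forall>p\<in>P. \<forall>e\<in>P. br (f a (br p e b)) (f a b) e \<in> P"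
    using heap_sim_iff by blast
next
  assume translates: "\<forall>a b. \<forall>p\<in>P. \<forall>e\<in>P. br (f a (br p e b)) (f a b) e \<in> P"
  obtain e where e: "e \<in> P" using nonempty ..
  have "f t s \<sim> f t s'" if "s \<sim> s'" for t s s'
  proof -
    have p: "br s s' e \<in> P" using that heap_sim_iff[OF e] by blast
    have "s = br (br s s' e) e s'" by (simp add: simps)
    then have "br (f t s) (f t s') e \<in> P" using translates p e by metis
    then show ?thesis using heap_sim_iff[OF e] by blast
  qed
  then show "heap_sim_congruent br P f" unfolding heap_sim_congruent_def by blast
qed

end

theorem lemma3p11:
  fixes br :: "'a \<Rightarrow> 'a \<Rightarrow> 'a \<Rightarrow> 'a" and m :: "'a \<Rightarrow> 'a \<Rightarrow> 'a" and P :: "'a set"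
  assumes "pretruss br m"
    and "normal_subheap br P"
  shows "paragon br m P \<longleftrightarrow>
    (\<forall>a b. \<forall>p\<in>P. \<forall>e\<in>P.
        br (m a (br p e b)) (m a b) e \<in> P \<and> br (m (br p e b) a) (m b a) e \<in> P)"
proof -
  interpret heap_normal_subheap br P
    using assms unfolding pretruss_def by unfold_locales auto
  have "paragon br m P \<longleftrightarrow>
      heap_sim_congruent br P m \<and> heap_sim_congruent br P (\<lambda>t s. m s t)"
    unfolding paragon_def closed_subheap_def left_closed_def right_closed_def
      heap_sim_classes_closed_iff[symmetric]
    using assms(2) heap_sim_class_sub_heap by blast
  also have "\<dots> \<longleftrightarrow> (\<forall>a b. \<forall>p\<in>P. \<forall>e\<in>P.
        br (m a (br p e b)) (m a b) e \<in> P \<and> br (m (br p e b) a) (m b a) e \<in> P)"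
    unfolding heap_sim_congruent_iff_translates by blast
  finally show ?thesis .
qed

end
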